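(* For $c>0$ define $$p_1(c)=1-2\Phi(c^{-1})-\sqrt{\tfrac{2}{\pi}}\,c\left(1-\exp\{-\tfrac{c^{-2}}{2}\}\right),$$ where $\Phi(s)=\Pr[X\ge s]$ for $X\sim N(0,1)$. Then for all $c>0$, $$p_1(c)=\sqrt{\tfrac{2}{\pi}}\sum_{k=0}^\infty\frac{(-1)^k}{2^kk!(2k+2)(2k+1)}\frac{1}{c^{2k+1}},$$ and for every $\delta\le\frac12$ and every $c\le\min\left\{\delta,\frac{1}{\sqrt{2\ln(1/\delta)}}\right\}$, $$e^{-\sqrt{\frac{2}{\pi}}(1+\delta)c}\le p_1(c)\le e^{-\sqrt{\frac2\pi}(1-\delta^3)c}.$$
   Context: $p_1(c)$ is the probability that two points at distance $cw$ collide under the Euclidean LSH $h(x)=\lceil (g^\top x+b)/w\rceil$ with $g\sim N(0,I_d)$, $b\sim U[0,w]$; the claim concerns only the explicit formula. *)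

theory Defs
  imports "HOL-Probability.Probability"
begin

definition Phi_tail :: "real \<Rightarrow> real" where
  "Phi_tail s = measure (density lborel std_normal_density) {s..}"

definition p1 :: "real \<Rightarrow> real" where
  "p1 c = 1 - 2 * Phi_tail (1 / c) - sqrt (2 / pi) * c * (1 - exp (- (c powi (-2)) / 2))"

end

(*
  Put s = 1/c and let G(s) = \<integral>\<^sub>0\<^sup>s exp(-x\<^sup>2/2) dx; gauss_primitive defines G by its Taylor series,
  the termwise antiderivative of the exponential series of exp(-x\<^sup>2/2).  Since Phi(0) = 1/2 by the
  Gaussian integral, Phi(s) = 1/2 - G(s)/sqrt(2 pi) for s \<ge> 0, hence
  p1(c) = sqrt(2/pi) (G(s) - c (1 - exp(-s\<^sup>2/2))), and subtracting the shifted exponential series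
  of c (1 - exp(-s\<^sup>2/2)) from the series of G gives the claimed series.

  For the bounds, the Mills-ratio estimates phi(s)/(s (1 + 1/s\<^sup>2)) \<le> Phi(s) \<le> phi(s)/s, obtained by
  comparing phi with the derivatives of -phi(x)/s and -phi(x)/x on [s, \<infinity>), give
  1 - sqrt(2/pi) c \<le> p1(c) \<le> 1 - sqrt(2/pi) c (1 - c\<^sup>2 exp(-s\<^sup>2/2)).  The hypotheses on c give
  c \<le> \<delta> and exp(-s\<^sup>2/2) \<le> \<delta>; then 1 + t \<le> exp t and exp(-y) \<le> 1 - y + y\<^sup>2/2 finish,
  the latter using sqrt(2/pi) (1 + \<delta>)\<^sup>2 \<le> 8/9 * 9/4 = 2.
*)

theory Submission
  imports Defs "HOL-Real_Asymp.Real_Asymp"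
begin

lemma sums_odd_index_iff:
  "(\<lambda>n. if odd n then f (n div 2) else 0) sums s \<longleftrightarrow> f sums s"
proof -
  have "strict_mono (\<lambda>k::nat. 2 * k + 1)"
    by (rule strict_monoI) simp
  moreover have "(if odd n then f (n div 2) else 0) = 0" if "n \<notin> range (\<lambda>k. 2 * k + 1)" for n
    using that by (auto elim!: oddE)
  ultimately show ?thesis
    using sums_mono_reindex[of "\<lambda>k. 2 * k + 1" "\<lambda>n. if odd n then f (n div 2) else 0"] by simp
qed

lemma sums_even_index_iff:
  "(\<lambda>n. if even n then f (n div 2) else 0) sums s \<longleftrightarrow> f sums s"
proof -
  have "strict_mono (\<lambda>k::nat. 2 * k)"
    by (rule strict_monoI) simp
  moreover have "(if even n then f (n div 2) else 0) = 0" if "n \<notin> range (\<lambda>k. 2 * k)" for n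
    using that by (auto elim!: evenE)
  ultimately show ?thesis
    using sums_mono_reindex[of "\<lambda>k. 2 * k" "\<lambda>n. if even n then f (n div 2) else 0"] by simp
qed

definition gauss_primitive :: "real \<Rightarrow> real" where
  "gauss_primitive x = (\<Sum>k. (-1) ^ k / (2 ^ k * fact k * (2 * real k + 1)) * x ^ (2 * k + 1))"

definition gauss_coeff :: "nat \<Rightarrow> real" where
  "gauss_coeff n =
     (if odd n then (-1) ^ (n div 2) / (2 ^ (n div 2) * fact (n div 2) * real n) else 0)"

lemma diffs_gauss_coeff:
  "diffs gauss_coeff n = (if even n then (-1) ^ (n div 2) / (2 ^ (n div 2) * fact (n div 2)) else 0)"
  by (cases "even n") (auto simp: diffs_def gauss_coeff_def elim!: evenE)

lemma exp_neg_half_square_sums: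
  fixes x :: real
  shows "(\<lambda>k. (-1) ^ k / (2 ^ k * fact k) * x ^ (2 * k)) sums exp (- x\<^sup>2 / 2)"
proof -
  have "(- x\<^sup>2 / 2) ^ k /\<^sub>R fact k = (-1) ^ k / (2 ^ k * fact k) * x ^ (2 * k)" for k
  proof -
    have "(- x\<^sup>2 / 2) ^ k = (-1) ^ k * x ^ (2 * k) / 2 ^ k"
      by (simp add: power_divide power_minus' power_mult)
    then show ?thesis
      by (simp add: field_simps)
  qed
  then show ?thesis
    using exp_converges[of "- x\<^sup>2 / 2"] by simp
qed

lemma one_minus_exp_neg_half_square_sums:
  fixes x :: real
  shows "(\<lambda>k. (-1) ^ k / (2 ^ (k + 1) * fact (k + 1)) * x ^ (2 * k + 2)) sums (1 - exp (- x\<^sup>2 / 2))"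
proof -
  let ?f = "\<lambda>k. (-1) ^ k / (2 ^ k * fact k) * x ^ (2 * k)"
  have "(\<lambda>k. ?f (Suc k)) sums (exp (- x\<^sup>2 / 2) - 1)"
    using sums_Suc_iff[of ?f "exp (- x\<^sup>2 / 2) - 1"] exp_neg_half_square_sums[of x] by simp
  from sums_minus[OF this] show ?thesis
    by simp
qed

lemma gauss_primitive_sums:
  "(\<lambda>k. (-1) ^ k / (2 ^ k * fact k * (2 * real k + 1)) * x ^ (2 * k + 1)) sums gauss_primitive x"
  unfolding gauss_primitive_def
proof (rule summable_sums, rule summable_comparison_test')
  show "summable (\<lambda>k. \<bar>x\<bar> * (inverse (fact k) * (x\<^sup>2 / 2) ^ k))"
    by (intro summable_mult summable_exp)
  fix k
  have "norm ((-1) ^ k / (2 ^ k * fact k * (2 * real k + 1)) * x ^ (2 * k + 1))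
      = \<bar>x\<bar> * (x\<^sup>2) ^ k / (2 ^ k * fact k) / (2 * real k + 1)"
    by (simp add: abs_mult power_mult power_abs)
  also have "\<dots> \<le> \<bar>x\<bar> * (x\<^sup>2) ^ k / (2 ^ k * fact k)"
    using divide_left_mono[of 1 "2 * real k + 1" "\<bar>x\<bar> * (x\<^sup>2) ^ k / (2 ^ k * fact k)"] by simp
  also have "\<dots> = \<bar>x\<bar> * (inverse (fact k) * (x\<^sup>2 / 2) ^ k)"
    by (simp add: power_divide field_simps)
  finally show "norm ((-1) ^ k / (2 ^ k * fact k * (2 * real k + 1)) * x ^ (2 * k + 1))
      \<le> \<bar>x\<bar> * (inverse (fact k) * (x\<^sup>2 / 2) ^ k)" .
qed

lemma gauss_coeff_power_series_sums: "(\<lambda>n. gauss_coeff n * x ^ n) sums gauss_primitive x"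
proof -
  let ?a = "\<lambda>k. (-1) ^ k / (2 ^ k * fact k * (2 * real k + 1)) * x ^ (2 * k + 1)"
  have "(\<lambda>n. gauss_coeff n * x ^ n) = (\<lambda>n. if odd n then ?a (n div 2) else 0)"
  proof
    fix n :: nat
    show "gauss_coeff n * x ^ n = (if odd n then ?a (n div 2) else 0)"
      by (cases "odd n") (auto simp: gauss_coeff_def elim!: oddE)
  qed
  then show ?thesis
    using sums_odd_index_iff[of ?a] gauss_primitive_sums[of x] by simp
qed

lemma has_real_derivative_gauss_primitive:
  "(gauss_primitive has_real_derivative exp (- x\<^sup>2 / 2)) (at x)"
proof -
  have "(\<lambda>n. diffs gauss_coeff n * x ^ n)
      = (\<lambda>n. if even n then (-1) ^ (n div 2) / (2 ^ (n div 2) * fact (n div 2)) * x ^ (2 * (n div 2)) else 0)"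
    by (auto simp: diffs_gauss_coeff elim!: evenE)
  then have "(\<lambda>n. diffs gauss_coeff n * x ^ n) sums exp (- x\<^sup>2 / 2)"
    using sums_even_index_iff[of "\<lambda>k. (-1) ^ k / (2 ^ k * fact k) * x ^ (2 * k)"]
      exp_neg_half_square_sums[of x] by simp
  moreover have "gauss_primitive = (\<lambda>x. \<Sum>n. gauss_coeff n * x ^ n)"
    using gauss_coeff_power_series_sums by (auto simp: sums_iff)
  ultimately show ?thesis
    using termdiffs_strong_converges_everywhere[of gauss_coeff x] gauss_coeff_power_series_sums
    by (simp add: sums_iff)
qed

lemma gauss_primitive_0 [simp]: "gauss_primitive 0 = 0"
  using gauss_primitive_sums[of 0] by (simp add: sums_iff)

lemma gauss_primitive_nonneg: "0 \<le> x \<Longrightarrow> 0 \<le> gauss_primitive x"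
  using DERIV_nonneg_imp_nondecreasing[of 0 x gauss_primitive] has_real_derivative_gauss_primitive
  by fastforce

lemma Phi_tail_nonneg: "0 \<le> Phi_tail s"
  by (simp add: Phi_tail_def)

lemma Phi_tail_nn_integral:
  "ennreal (Phi_tail s) = (\<integral>\<^sup>+x \<in> {s..}. ennreal (std_normal_density x) \<partial>lborel)"
proof -
  interpret prob_space "density lborel std_normal_density"
    by (rule prob_space_normal_density) simp
  show ?thesis
    by (simp add: Phi_tail_def emeasure_eq_measure[symmetric] emeasure_density)
qed

lemma Phi_tail_0: "Phi_tail 0 = 1 / 2"
proof -
  have gauss: "(\<integral>\<^sup>+x. ennreal (indicator {0..} x * exp (- x\<^sup>2)) \<partial>lborel) = ennreal (sqrt pi / 2)"
    using gaussian_moment_0 by (subst nn_integral_eq_integral) (auto simp: has_bochner_integral_iff)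
  have "ennreal (Phi_tail 0)
      = ennreal (sqrt 2) * (\<integral>\<^sup>+x \<in> {0..}. ennreal (std_normal_density (sqrt 2 * x)) \<partial>lborel)"
    unfolding Phi_tail_nn_integral
    using nn_integral_real_affine[of "\<lambda>x. ennreal (std_normal_density x) * indicator {0..} x" "sqrt 2" 0]
    by (simp add: indicator_def zero_le_mult_iff)
  also have "\<dots> = (\<integral>\<^sup>+x. ennreal (1 / sqrt pi) * ennreal (indicator {0..} x * exp (- x\<^sup>2)) \<partial>lborel)"
    by (subst nn_integral_cmult[symmetric])
      (auto intro!: nn_integral_cong simp: ennreal_mult[symmetric] std_normal_density_def
        real_sqrt_mult power_mult_distrib indicator_def)
  also have "\<dots> = ennreal (1 / sqrt pi) * ennreal (sqrt pi / 2)"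
    by (subst nn_integral_cmult) (auto simp: gauss)
  also have "\<dots> = ennreal (1 / 2)"
    by (simp add: ennreal_mult[symmetric])
  finally show ?thesis
    using Phi_tail_nonneg[of 0] by (subst (asm) ennreal_inj) auto
qed

lemma Phi_tail_eq_gauss_primitive:
  assumes "0 \<le> s"
  shows "Phi_tail s = 1 / 2 - gauss_primitive s / sqrt (2 * pi)"
proof -
  have deriv: "((\<lambda>x. gauss_primitive x / sqrt (2 * pi)) has_real_derivative std_normal_density x) (at x)"
    for x
    using DERIV_cdivide[OF has_real_derivative_gauss_primitive, of "sqrt (2 * pi)"]
    by (simp add: std_normal_density_def)
  have head: "(\<integral>\<^sup>+x \<in> {0..s}. ennreal (std_normal_density x) \<partial>lborel)
      = ennreal (gauss_primitive s / sqrt (2 * pi))"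
    using nn_integral_FTC_Icc[OF _ deriv _ assms] by simp
  have tail: "(\<integral>\<^sup>+x \<in> {s<..}. ennreal (std_normal_density x) \<partial>lborel) = ennreal (Phi_tail s)"
    unfolding Phi_tail_nn_integral
    by (rule nn_integral_cong_AE) (use AE_lborel_singleton[of s] in \<open>auto simp: indicator_def\<close>)
  have "ennreal (1 / 2) = (\<integral>\<^sup>+x \<in> {0..s} \<union> {s<..}. ennreal (std_normal_density x) \<partial>lborel)"
    using assms by (simp add: ivl_disj_un_one(7) Phi_tail_0 flip: Phi_tail_nn_integral)
  also have "\<dots> = ennreal (gauss_primitive s / sqrt (2 * pi)) + ennreal (Phi_tail s)"
    by (subst nn_integral_disjoint_pair) (auto simp: head tail)
  also have "\<dots> = ennreal (gauss_primitive s / sqrt (2 * pi) + Phi_tail s)"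
    using assms by (simp add: gauss_primitive_nonneg Phi_tail_nonneg)
  finally show ?thesis
    using assms gauss_primitive_nonneg[of s] Phi_tail_nonneg[of s]
    by (subst (asm) ennreal_inj) auto
qed

lemma has_real_derivative_std_normal_density:
  "(std_normal_density has_real_derivative - x * std_normal_density x) (at x)"
proof -
  have "((\<lambda>x. exp (- x\<^sup>2 / 2)) has_real_derivative - x * exp (- x\<^sup>2 / 2)) (at x)"
    by (auto intro!: derivative_eq_intros)
  from DERIV_cmult[OF this, of "1 / sqrt (2 * pi)"] show ?thesis
    unfolding std_normal_density_def[abs_def] by (simp add: mult_ac)
qed

lemma Phi_tail_le_Mills:
  assumes s: "0 < s"
  shows "Phi_tail s \<le> std_normal_density s / s"
proof -
  have "ennreal (Phi_tail s) \<le> (\<integral>\<^sup>+x \<in> {s..}. ennreal (x * std_normal_density x / s) \<partial>lborel)"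
    unfolding Phi_tail_nn_integral
  proof (intro nn_integral_mono)
    fix x
    show "ennreal (std_normal_density x) * indicator {s..} x
        \<le> ennreal (x * std_normal_density x / s) * indicator {s..} x"
      using s by (auto simp: indicator_def field_simps intro!: ennreal_leI mult_right_mono)
  qed
  also have "\<dots> = ennreal (0 - (- std_normal_density s / s))"
  proof (rule nn_integral_FTC_atLeast[where F = "\<lambda>x. - std_normal_density x / s"])
    fix x assume "s \<le> x"
    show "((\<lambda>x. - std_normal_density x / s) has_real_derivative x * std_normal_density x / s) (at x)"
      using DERIV_cdivide[OF DERIV_minus[OF has_real_derivative_std_normal_density], of s] by simp
    show "0 \<le> x * std_normal_density x / s"
      using s \<open>s \<le> x\<close> by simp
  next
    show "((\<lambda>x. - std_normal_density x / s) \<longlongrightarrow> 0) at_top"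
      unfolding std_normal_density_def using s by real_asymp
  qed simp
  finally show ?thesis
    using s by simp
qed

lemma Mills_le_Phi_tail:
  assumes s: "0 < s"
  shows "std_normal_density s / s \<le> (1 + 1 / s\<^sup>2) * Phi_tail s"
proof -
  have "ennreal (0 - (- std_normal_density s / s))
      = (\<integral>\<^sup>+x \<in> {s..}. ennreal ((1 + 1 / x\<^sup>2) * std_normal_density x) \<partial>lborel)"
  proof (rule nn_integral_FTC_atLeast[where F = "\<lambda>x. - std_normal_density x / x", symmetric])
    fix x assume "s \<le> x"
    then have "x \<noteq> 0"
      using s by simp
    then show "((\<lambda>x. - std_normal_density x / x) has_real_derivative
        (1 + 1 / x\<^sup>2) * std_normal_density x) (at x)"
      by (auto intro!: derivative_eq_intros has_real_derivative_std_normal_density[THEN DERIV_chain2]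
        simp: field_simps power2_eq_square)
  next
    show "((\<lambda>x. - std_normal_density x / x) \<longlongrightarrow> 0) at_top"
      unfolding std_normal_density_def by real_asymp
  qed simp_all
  also have "\<dots> \<le> (\<integral>\<^sup>+x \<in> {s..}. ennreal ((1 + 1 / s\<^sup>2) * std_normal_density x) \<partial>lborel)"
  proof (intro nn_integral_mono)
    fix x
    have "s \<le> x \<Longrightarrow> 1 / x\<^sup>2 \<le> 1 / s\<^sup>2"
      using s by (intro divide_left_mono power_mono) auto
    then show "ennreal ((1 + 1 / x\<^sup>2) * std_normal_density x) * indicator {s..} x
        \<le> ennreal ((1 + 1 / s\<^sup>2) * std_normal_density x) * indicator {s..} x"
      by (auto simp: indicator_def intro!: ennreal_leI mult_right_mono)
  qed
  also have "\<dots> = ennreal (1 + 1 / s\<^sup>2) * ennreal (Phi_tail s)"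
    unfolding Phi_tail_nn_integral
    by (subst nn_integral_cmult[symmetric]) (auto simp: ennreal_mult' mult.assoc)
  also have "\<dots> = ennreal ((1 + 1 / s\<^sup>2) * Phi_tail s)"
    by (simp add: ennreal_mult')
  finally show ?thesis
    using s Phi_tail_nonneg[of s] by (simp add: ennreal_le_iff)
qed

lemma two_div_sqrt_two_pi: "2 / sqrt (2 * pi) = sqrt (2 / pi)"
  by (simp add: real_sqrt_divide real_sqrt_mult field_simps real_sqrt_mult_self)

lemma p1_altdef: "p1 c = 1 - 2 * Phi_tail (1 / c) - sqrt (2 / pi) * c * (1 - exp (- (1 / c)\<^sup>2 / 2))"
  by (simp add: p1_def power_int_minus_divide power_one_over)

lemma p1_eq_gauss_primitive:
  assumes "0 < c"
  shows "p1 c = sqrt (2 / pi) * (gauss_primitive (1 / c) - c * (1 - exp (- (1 / c)\<^sup>2 / 2)))"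
  using assms
  by (simp add: p1_altdef Phi_tail_eq_gauss_primitive algebra_simps flip: two_div_sqrt_two_pi)

lemma p1_sums:
  assumes c: "0 < c"
  shows "(\<lambda>k. sqrt (2 / pi) * ((-1) ^ k / (2 ^ k * fact k * (2 * real k + 2) * (2 * real k + 1)))
            * (1 / c ^ (2 * k + 1))) sums p1 c"
proof -
  have term_eq: "(-1) ^ k / (2 ^ k * fact k * (2 * real k + 1)) * (1 / c) ^ (2 * k + 1)
      - c * ((-1) ^ k / (2 ^ (k + 1) * fact (k + 1)) * (1 / c) ^ (2 * k + 2))
      = (-1) ^ k / (2 ^ k * fact k * (2 * real k + 2) * (2 * real k + 1)) * (1 / c ^ (2 * k + 1))"
    for k
  proof -
    define a where "a = (-1) ^ k / (2 ^ k * fact k) * (1 / c) ^ (2 * k + 1)"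
    have first: "(-1) ^ k / (2 ^ k * fact k * (2 * real k + 1)) * (1 / c) ^ (2 * k + 1) = a / (2 * real k + 1)"
      by (simp add: a_def)
    have "c * ((-1) ^ k / (2 ^ (k + 1) * fact (k + 1)) * (1 / c) ^ (2 * k + 2))
        = (-1) ^ k / (2 ^ (k + 1) * fact (k + 1)) * (c * (1 / c) ^ (2 * k + 2))"
      by (rule mult.left_commute)
    also have "\<dots> = (-1) ^ k / (2 ^ k * fact k * (2 * real k + 2)) * (1 / c) ^ (2 * k + 1)"
      using c by (simp add: algebra_simps)
    also have "\<dots> = a / (2 * real k + 2)"
      by (simp add: a_def)
    finally have second: "c * ((-1) ^ k / (2 ^ (k + 1) * fact (k + 1)) * (1 / c) ^ (2 * k + 2))
        = a / (2 * real k + 2)" .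
    have diff: "a / (2 * real k + 1) - a / (2 * real k + 2) = a / ((2 * real k + 2) * (2 * real k + 1))"
      by (simp add: field_simps)
    have last: "a / ((2 * real k + 2) * (2 * real k + 1))
        = (-1) ^ k / (2 ^ k * fact k * (2 * real k + 2) * (2 * real k + 1)) * (1 / c ^ (2 * k + 1))"
      by (simp add: a_def power_one_over)
    show ?thesis
      by (simp only: first second diff last)
  qed
  have "(\<lambda>k. (-1) ^ k / (2 ^ k * fact k * (2 * real k + 1)) * (1 / c) ^ (2 * k + 1)
      - c * ((-1) ^ k / (2 ^ (k + 1) * fact (k + 1)) * (1 / c) ^ (2 * k + 2)))
      sums (gauss_primitive (1 / c) - c * (1 - exp (- (1 / c)\<^sup>2 / 2)))"
    by (intro sums_diff sums_mult gauss_primitive_sums one_minus_exp_neg_half_square_sums)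
  then have "(\<lambda>k. sqrt (2 / pi) * ((-1) ^ k / (2 ^ k * fact k * (2 * real k + 2) * (2 * real k + 1))
      * (1 / c ^ (2 * k + 1)))) sums p1 c"
    unfolding p1_eq_gauss_primitive[OF c] term_eq by (rule sums_mult)
  then show ?thesis
    by (simp only: mult.assoc)
qed

lemma std_normal_density_inverse_div:
  "std_normal_density (1 / c) / (1 / c) = sqrt (2 / pi) * c * exp (- (1 / c)\<^sup>2 / 2) / 2"
  by (simp add: std_normal_density_def flip: two_div_sqrt_two_pi)

lemma p1_ge_linear:
  assumes "0 < c"
  shows "1 - sqrt (2 / pi) * c \<le> p1 c"
proof -
  have "Phi_tail (1 / c) \<le> sqrt (2 / pi) * c * exp (- (1 / c)\<^sup>2 / 2) / 2"
    using Phi_tail_le_Mills[of "1 / c"] assms unfolding std_normal_density_inverse_div by simp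
  then show ?thesis
    by (simp add: p1_altdef algebra_simps)
qed

lemma p1_le_linear_correction:
  assumes c: "0 < c"
  shows "p1 c \<le> 1 - sqrt (2 / pi) * c * (1 - c\<^sup>2 * exp (- (1 / c)\<^sup>2 / 2))"
proof -
  define m where "m = sqrt (2 / pi) * c * exp (- (1 / c)\<^sup>2 / 2)"
  have "0 \<le> m"
    using c by (simp add: m_def)
  have "m / 2 \<le> (1 + c\<^sup>2) * Phi_tail (1 / c)"
    using Mills_le_Phi_tail[of "1 / c"] c unfolding std_normal_density_inverse_div
    by (simp add: m_def power_one_over)
  moreover have "(1 + c\<^sup>2) * (m * (1 - c\<^sup>2)) \<le> m"
    using mult_nonneg_nonneg[OF zero_le_power2[of "c\<^sup>2"] \<open>0 \<le> m\<close>]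
    by (simp add: algebra_simps power2_eq_square)
  ultimately have "(1 + c\<^sup>2) * (m * (1 - c\<^sup>2)) \<le> (1 + c\<^sup>2) * (2 * Phi_tail (1 / c))"
    by linarith
  then have "m * (1 - c\<^sup>2) \<le> 2 * Phi_tail (1 / c)"
    by (rule mult_left_le_imp_le) (simp add: add_pos_nonneg)
  then show ?thesis
    by (simp add: p1_altdef m_def algebra_simps)
qed

lemma sqrt_two_div_pi_le: "sqrt (2 / pi) \<le> 8 / 9"
proof -
  have "2 / pi \<le> (8 / 9)\<^sup>2"
    using pi_gt3 by (simp add: field_simps power2_eq_square)
  then have "sqrt (2 / pi) \<le> sqrt ((8 / 9)\<^sup>2)"
    by (rule real_sqrt_le_mono)
  then show ?thesis
    by simp
qed

lemma exp_neg_le_quadratic: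
  fixes y :: real
  assumes "0 \<le> y"
  shows "exp (- y) \<le> 1 - y + y\<^sup>2 / 2"
proof -
  obtain t where "exp (- y) = (\<Sum>m<3. (- y) ^ m / fact m) + exp t / fact 3 * (- y) ^ 3"
    using Maclaurin_exp_le[of "- y" 3] by blast
  moreover have "exp t / fact 3 * (- y) ^ 3 \<le> 0"
    using assms by (simp add: mult_nonneg_nonpos)
  ultimately show ?thesis
    by (simp add: eval_nat_numeral power2_eq_square)
qed

lemma exp_neg_half_inverse_square_le:
  assumes "0 < \<delta>" "\<delta> < 1" "0 < c" "c \<le> 1 / sqrt (2 * ln (1 / \<delta>))"
  shows "exp (- (1 / c)\<^sup>2 / 2) \<le> \<delta>"
proof -
  have "0 < ln (1 / \<delta>)"
    using assms by simp
  then have "sqrt (2 * ln (1 / \<delta>)) \<le> 1 / c"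
    using assms by (simp add: field_simps)
  then have "2 * ln (1 / \<delta>) \<le> (1 / c)\<^sup>2"
    by (rule sqrt_le_D)
  then have "- (1 / c)\<^sup>2 / 2 \<le> ln \<delta>"
    using assms by (simp add: ln_div)
  then show ?thesis
    using assms by (metis exp_le_cancel_iff exp_ln)
qed

lemma exp_le_p1:
  assumes "0 < \<delta>" "\<delta> \<le> 1 / 2" "0 < c" "c \<le> \<delta>"
  shows "exp (- sqrt (2 / pi) * (1 + \<delta>) * c) \<le> p1 c"
proof -
  define a where "a = sqrt (2 / pi)"
  define y where "y = a * (1 + \<delta>) * c"
  have "0 \<le> a"
    by (simp add: a_def)
  have "(1 + \<delta>)\<^sup>2 \<le> (3 / 2)\<^sup>2"
    using assms by (intro power_mono) auto
  then have "a * (1 + \<delta>)\<^sup>2 \<le> 8 / 9 * (9 / 4)"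
    using sqrt_two_div_pi_le \<open>0 \<le> a\<close> by (intro mult_mono) (auto simp: a_def power2_eq_square)
  then have "a * (1 + \<delta>)\<^sup>2 * c \<le> 2 * \<delta>"
    using assms by (intro mult_mono[of _ 2 c \<delta>, simplified]) auto
  then have "y\<^sup>2 / 2 \<le> a * c * \<delta>"
    using assms \<open>0 \<le> a\<close> mult_left_mono[of "a * (1 + \<delta>)\<^sup>2 * c" "2 * \<delta>" "a * c"]
    by (simp add: y_def power2_eq_square mult_ac)
  then have "exp (- y) \<le> 1 - a * c"
    using exp_neg_le_quadratic[of y] assms \<open>0 \<le> a\<close> by (simp add: y_def algebra_simps)
  also have "\<dots> \<le> p1 c"
    using p1_ge_linear assms by (simp add: a_def)
  finally show ?thesis
    by (simp add: y_def a_def)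
qed

lemma p1_le_exp:
  assumes "0 < \<delta>" "\<delta> < 1" "0 < c" "c \<le> \<delta>" "c \<le> 1 / sqrt (2 * ln (1 / \<delta>))"
  shows "p1 c \<le> exp (- sqrt (2 / pi) * (1 - \<delta> ^ 3) * c)"
proof -
  define a where "a = sqrt (2 / pi)"
  define E where "E = exp (- (1 / c)\<^sup>2 / 2)"
  have "c\<^sup>2 * E \<le> \<delta>\<^sup>2 * \<delta>"
    using assms exp_neg_half_inverse_square_le[of \<delta> c]
    by (intro mult_mono power_mono) (auto simp: E_def)
  then have correction_le: "a * c * (c\<^sup>2 * E) \<le> a * c * (\<delta>\<^sup>2 * \<delta>)"
    using assms by (intro mult_left_mono) (auto simp: a_def)
  have "p1 c \<le> 1 - a * c * (1 - c\<^sup>2 * E)"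
    using p1_le_linear_correction assms by (simp add: a_def E_def)
  also have "\<dots> = 1 - a * c + a * c * (c\<^sup>2 * E)"
    by (simp add: algebra_simps)
  also have "\<dots> \<le> 1 - a * c + a * c * (\<delta>\<^sup>2 * \<delta>)"
    using correction_le by simp
  also have "\<dots> = 1 + (- a * (1 - \<delta> ^ 3) * c)"
    by (simp add: algebra_simps power2_eq_square power3_eq_cube)
  also have "\<dots> \<le> exp (- a * (1 - \<delta> ^ 3) * c)"
    by (rule exp_ge_add_one_self)
  finally show ?thesis
    by (simp add: a_def)
qed

theorem lemma6:
  shows "(\<forall>c::real. c > 0 \<longrightarrow>
           (\<lambda>k::nat. sqrt (2 / pi) * ((-1) ^ k / (2 ^ k * fact k * (2 * real k + 2) * (2 * real k + 1)))
                       * (1 / c ^ (2 * k + 1))) sums p1 c) \<and>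
         (\<forall>(\<delta>::real) (c::real). 0 < \<delta> \<longrightarrow> \<delta> \<le> 1 / 2 \<longrightarrow> 0 < c \<longrightarrow>
           c \<le> min \<delta> (1 / sqrt (2 * ln (1 / \<delta>))) \<longrightarrow>
           exp (- sqrt (2 / pi) * (1 + \<delta>) * c) \<le> p1 c \<and>
           p1 c \<le> exp (- sqrt (2 / pi) * (1 - \<delta> ^ 3) * c))"
  using p1_sums exp_le_p1 p1_le_exp by auto

end
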